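(* Let $G$ be a graph and $n\ge1$, and let $\eta:G^n\to G^{(n)}$ be the graph map $\eta(v_1,\dots,v_n)=\prod_{i=1}^n v_i$. Then the induced homomorphism $\eta^*:H_1(G^n)\to H_1(G^{(n)})$, given on cycles by $\eta^*([C])=[\eta(C)]$, is surjective.
   Context: All graphs are connected, simple and locally finite. $G^n$ is the Cartesian (box) product graph. $G^{(n)}$ is the $n$th reduced power: vertices are degree-$n$ monomials in vertices of $G$, adjacent iff they differ by moving one token along one edge of $G$ (equivalently, the quotient of $G^n$ by $\Sigma_n$). For a graph $K$ with ordered vertices, $C_1(K)$ is the free abelian group on edges $w_iw_j$ ($i<j$), $[w_i,w_j]$ equals $w_iw_j$, $-w_jw_i$ or $0$ according as $i<j$, $i>j$, $i=j$, and for a path $P=(p_0,\dots,p_\ell)$, $[P]=\sum_i[p_i,p_{i+1}]$. $H_1(K)$ is the subgroup of $C_1(K)$ generated by $[C]$ for cycles $C$. A graph map $f$ induces $f^*:C_1\to C_1$ by $[u,v]\mapsto[f(u),f(v)]$. *)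

theory Defs
  imports Main "HOL-Library.Multiset"
begin

definition simple_graph :: "'v set \<Rightarrow> ('v \<Rightarrow> 'v \<Rightarrow> bool) \<Rightarrow> bool" where
  "simple_graph V E \<longleftrightarrow>
     (\<forall>u v. E u v \<longrightarrow> u \<in> V \<and> v \<in> V) \<and>
     (\<forall>u v. E u v \<longrightarrow> E v u) \<and> (\<forall>u. \<not> E u u)"

definition locally_finite :: "'v set \<Rightarrow> ('v \<Rightarrow> 'v \<Rightarrow> bool) \<Rightarrow> bool" where
  "locally_finite V E \<longleftrightarrow> (\<forall>u\<in>V. finite {v. E u v})"

definition connected_graph :: "'v set \<Rightarrow> ('v \<Rightarrow> 'v \<Rightarrow> bool) \<Rightarrow> bool" where
  "connected_graph V E \<longleftrightarrow> V \<noteq> {} \<and> (\<forall>u\<in>V. \<forall>v\<in>V. E\<^sup>*\<^sup>* u v)"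

definition graph :: "'v set \<Rightarrow> ('v \<Rightarrow> 'v \<Rightarrow> bool) \<Rightarrow> bool" where
  "graph V E \<longleftrightarrow> simple_graph V E \<and> locally_finite V E \<and> connected_graph V E"

definition box_pow_V :: "'v set \<Rightarrow> nat \<Rightarrow> 'v list set" where
  "box_pow_V V n = {xs. length xs = n \<and> set xs \<subseteq> V}"

definition box_pow_E :: "('v \<Rightarrow> 'v \<Rightarrow> bool) \<Rightarrow> nat \<Rightarrow> 'v list \<Rightarrow> 'v list \<Rightarrow> bool" where
  "box_pow_E E n xs ys \<longleftrightarrow> length xs = n \<and> length ys = n \<and>
     (\<exists>i<n. E (xs ! i) (ys ! i) \<and> (\<forall>j<n. j \<noteq> i \<longrightarrow> xs ! j = ys ! j))"

text \<open>G^(n): vertices are degree-n monomials in vertices of G, i.e. multisets of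
  size n over V; adjacent iff one obtains one from the other by moving one token
  along one edge of G.\<close>

definition red_pow_V :: "'v set \<Rightarrow> nat \<Rightarrow> 'v multiset set" where
  "red_pow_V V n = {M. size M = n \<and> set_mset M \<subseteq> V}"

definition red_pow_E :: "('v \<Rightarrow> 'v \<Rightarrow> bool) \<Rightarrow> nat \<Rightarrow> 'v multiset \<Rightarrow> 'v multiset \<Rightarrow> bool" where
  "red_pow_E E n M N \<longleftrightarrow> size M = n \<and>
     (\<exists>u v. E u v \<and> u \<in># M \<and> N = M - {#u#} + {#v#})"

definition eta :: "'v list \<Rightarrow> 'v multiset" where
  "eta xs = mset xs"

definition strict_linear_on :: "'v set \<Rightarrow> ('v \<Rightarrow> 'v \<Rightarrow> bool) \<Rightarrow> bool" where
  "strict_linear_on V lt \<longleftrightarrow>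
     (\<forall>x\<in>V. \<not> lt x x) \<and>
     (\<forall>x\<in>V. \<forall>y\<in>V. \<forall>z\<in>V. lt x y \<longrightarrow> lt y z \<longrightarrow> lt x z) \<and>
     (\<forall>x\<in>V. \<forall>y\<in>V. x \<noteq> y \<longrightarrow> lt x y \<or> lt y x)"

text \<open>An element of the free abelian group C_1(K) on the edges w_i w_j (i<j) is
  represented by its (finitely supported) integer coefficient function on
  ordered pairs (w_i, w_j) with w_i < w_j adjacent.\<close>

definition C1 :: "('v \<Rightarrow> 'v \<Rightarrow> bool) \<Rightarrow> 'v set \<Rightarrow> ('v \<Rightarrow> 'v \<Rightarrow> bool) \<Rightarrow> ('v \<times> 'v \<Rightarrow> int) set" where
  "C1 lt V E = {c. finite {p. c p \<noteq> 0} \<and>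
     (\<forall>u v. c (u, v) \<noteq> 0 \<longrightarrow> u \<in> V \<and> v \<in> V \<and> E u v \<and> lt u v)}"

definition brk :: "('v \<Rightarrow> 'v \<Rightarrow> bool) \<Rightarrow> 'v \<Rightarrow> 'v \<Rightarrow> ('v \<times> 'v \<Rightarrow> int)" where
  "brk lt u v = (\<lambda>p. if u = v then 0
                    else if lt u v then (if p = (u, v) then 1 else 0)
                    else (if p = (v, u) then -1 else 0))"

definition is_path :: "'v set \<Rightarrow> ('v \<Rightarrow> 'v \<Rightarrow> bool) \<Rightarrow> 'v list \<Rightarrow> bool" where
  "is_path V E P \<longleftrightarrow> P \<noteq> [] \<and> set P \<subseteq> V \<and>
     (\<forall>i. Suc i < length P \<longrightarrow> E (P ! i) (P ! Suc i))"

definition path_chain :: "('v \<Rightarrow> 'v \<Rightarrow> bool) \<Rightarrow> 'v list \<Rightarrow> ('v \<times> 'v \<Rightarrow> int)" where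
  "path_chain lt P = (\<lambda>q. \<Sum>i<length P - 1. brk lt (P ! i) (P ! Suc i) q)"

definition is_cycle :: "'v set \<Rightarrow> ('v \<Rightarrow> 'v \<Rightarrow> bool) \<Rightarrow> 'v list \<Rightarrow> bool" where
  "is_cycle V E C \<longleftrightarrow> is_path V E C \<and> hd C = last C"

inductive_set H1 :: "('v \<Rightarrow> 'v \<Rightarrow> bool) \<Rightarrow> 'v set \<Rightarrow> ('v \<Rightarrow> 'v \<Rightarrow> bool) \<Rightarrow> ('v \<times> 'v \<Rightarrow> int) set"
  for lt V E where
  zero: "(\<lambda>q. 0) \<in> H1 lt V E"
| add: "c \<in> H1 lt V E \<Longrightarrow> is_cycle V E C \<Longrightarrow> (\<lambda>q. c q + path_chain lt C q) \<in> H1 lt V E"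
| diff: "c \<in> H1 lt V E \<Longrightarrow> is_cycle V E C \<Longrightarrow> (\<lambda>q. c q - path_chain lt C q) \<in> H1 lt V E"

definition chain_map :: "('w \<Rightarrow> 'w \<Rightarrow> bool) \<Rightarrow> ('v \<Rightarrow> 'w) \<Rightarrow> ('v \<times> 'v \<Rightarrow> int) \<Rightarrow> ('w \<times> 'w \<Rightarrow> int)" where
  "chain_map lt' f c = (\<lambda>q. \<Sum>p\<in>{p. c p \<noteq> 0}. c p * brk lt' (f (fst p)) (f (snd p)) q)"

end

theory Submission
  imports Defs "HOL-Combinatorics.Permutations"
begin

text \<open>The map \<open>\<eta>\<close> sends cycles of \<open>G^n\<close> to cycles of \<open>G^(n)\<close>, so \<open>\<eta>\<^sup>*\<close> maps \<open>H\<^sub>1(G^n)\<close>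
  into \<open>H\<^sub>1(G^(n))\<close>. Conversely, every edge of \<open>G^(n)\<close> leaving \<open>\<eta> x\<close> is the image of an edge of
  \<open>G^n\<close> leaving \<open>x\<close>, so a cycle \<open>D\<close> of \<open>G^(n)\<close> lifts to a path from \<open>x\<close> to a permutation of \<open>x\<close>.
  To close it up, realise each transposition of coordinates \<open>i, j\<close> by moving coordinate \<open>i\<close>
  along a path from \<open>x\<^sub>i\<close> to \<open>x\<^sub>j\<close> and then coordinate \<open>j\<close> back along the reversed path: under
  \<open>\<eta>\<close> the two legs are one path traversed in opposite directions, so their chains cancel and
  the closed lift \<open>C\<close> satisfies \<open>\<eta>\<^sup>*[C] = [D]\<close>.\<close>

lemma path_chain_Nil [simp]: "path_chain lt [] = (\<lambda>q. 0)"
  by (simp add: path_chain_def)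

lemma path_chain_singleton [simp]: "path_chain lt [a] = (\<lambda>q. 0)"
  by (simp add: path_chain_def)

lemma path_chain_Cons2 [simp]:
  "path_chain lt (a # b # P) = (\<lambda>q. brk lt a b q + path_chain lt (b # P) q)"
  unfolding path_chain_def by (simp add: sum.lessThan_Suc_shift del: sum.lessThan_Suc)

lemma brk_nonzero: "brk lt u v p \<noteq> 0 \<Longrightarrow> p = (u, v) \<or> p = (v, u)"
  by (auto simp: brk_def split: if_splits)

lemma path_chain_nonzero: "path_chain lt P p \<noteq> 0 \<Longrightarrow> p \<in> set P \<times> set P"
proof (induction P rule: induct_list012)
  case (3 a b P)
  then have "brk lt a b p \<noteq> 0 \<or> path_chain lt (b # P) p \<noteq> 0" by auto
  then show ?case
  proof
    assume "brk lt a b p \<noteq> 0"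
    then show ?thesis by (auto dest: brk_nonzero)
  qed (use 3 in auto)
qed auto

lemma finite_path_chain_support: "finite {p. path_chain lt P p \<noteq> 0}"
  by (rule finite_subset[of _ "set P \<times> set P"]) (auto dest: path_chain_nonzero)

lemma H1_finite_support: "c \<in> H1 lt V E \<Longrightarrow> finite {p. c p \<noteq> 0}"
proof (induction rule: H1.induct)
  case (add c C)
  have "{p. c p + path_chain lt C p \<noteq> 0} \<subseteq> {p. c p \<noteq> 0} \<union> {p. path_chain lt C p \<noteq> 0}"
    by auto
  then show ?case by (rule finite_subset) (simp add: add.IH finite_path_chain_support)
next
  case (diff c C)
  have "{p. c p - path_chain lt C p \<noteq> 0} \<subseteq> {p. c p \<noteq> 0} \<union> {p. path_chain lt C p \<noteq> 0}"
    by auto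
  then show ?case by (rule finite_subset) (simp add: diff.IH finite_path_chain_support)
qed simp

lemma brk_swap:
  assumes "strict_linear_on V lt" "u \<in> V" "v \<in> V"
  shows "brk lt v u = (\<lambda>q. - brk lt u v q)"
proof -
  have "\<not> (lt u v \<and> lt v u)" and "u \<noteq> v \<Longrightarrow> lt u v \<or> lt v u"
    using assms unfolding strict_linear_on_def by meson+
  then show ?thesis by (auto simp: brk_def)
qed

lemma path_chain_append:
  "P \<noteq> [] \<Longrightarrow> last P = hd Q \<Longrightarrow> Q \<noteq> [] \<Longrightarrow>
    path_chain lt (P @ tl Q) = (\<lambda>q. path_chain lt P q + path_chain lt Q q)"
proof (induction P rule: induct_list012)
  case (2 x)
  then show ?case by (cases Q) auto
qed (auto simp: fun_eq_iff)

lemma path_chain_rev: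
  assumes "strict_linear_on V lt"
  shows "set P \<subseteq> V \<Longrightarrow> path_chain lt (rev P) = (\<lambda>q. - path_chain lt P q)"
proof (induction P rule: induct_list012)
  case (3 x y zs)
  have "path_chain lt (rev (x # y # zs)) = path_chain lt (rev (y # zs) @ tl [y, x])"
    by simp
  also have "\<dots> = (\<lambda>q. path_chain lt (rev (y # zs)) q + brk lt y x q)"
    by (subst path_chain_append) auto
  also have "\<dots> = (\<lambda>q. - path_chain lt (x # y # zs) q)"
    using 3 brk_swap[OF assms, of x y] by auto
  finally show ?case .
qed auto

lemma path_chain_there_and_back:
  assumes "strict_linear_on V lt" "set P \<subseteq> V" "P \<noteq> []"
  shows "path_chain lt (P @ tl (rev P)) = (\<lambda>q. 0)"
  using assms by (simp add: path_chain_append hd_rev path_chain_rev[OF assms(1,2)])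

lemma chain_map_as_sum:
  assumes "finite S" "{p. c p \<noteq> 0} \<subseteq> S"
  shows "chain_map lt f c q = (\<Sum>p\<in>S. c p * brk lt (f (fst p)) (f (snd p)) q)"
  unfolding chain_map_def by (rule sum.mono_neutral_left) (use assms in auto)

lemma chain_map_zero [simp]: "chain_map lt f (\<lambda>q. 0) = (\<lambda>q. 0)"
  by (simp add: chain_map_def)

lemma chain_map_add:
  assumes "finite {p. c p \<noteq> 0}" "finite {p. d p \<noteq> 0}"
  shows "chain_map lt f (\<lambda>q. c q + d q) = (\<lambda>q. chain_map lt f c q + chain_map lt f d q)"
proof
  fix q
  let ?S = "{p. c p \<noteq> 0} \<union> {p. d p \<noteq> 0}"
  have "finite ?S" using assms by simp
  then show "chain_map lt f (\<lambda>q. c q + d q) q = chain_map lt f c q + chain_map lt f d q"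
    by (subst (1 2 3) chain_map_as_sum[of ?S]) (auto simp: sum.distrib ring_distribs)
qed

lemma chain_map_diff:
  assumes "finite {p. c p \<noteq> 0}" "finite {p. d p \<noteq> 0}"
  shows "chain_map lt f (\<lambda>q. c q - d q) = (\<lambda>q. chain_map lt f c q - chain_map lt f d q)"
proof
  fix q
  let ?S = "{p. c p \<noteq> 0} \<union> {p. d p \<noteq> 0}"
  have "finite ?S" using assms by simp
  then show "chain_map lt f (\<lambda>q. c q - d q) q = chain_map lt f c q - chain_map lt f d q"
    by (subst (1 2 3) chain_map_as_sum[of ?S]) (auto simp: sum_subtractf left_diff_distrib)
qed

lemma chain_map_brk:
  assumes "strict_linear_on V1 lt1" "strict_linear_on V2 lt2"
    and "u \<in> V1" "v \<in> V1" "f u \<in> V2" "f v \<in> V2"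
  shows "chain_map lt2 f (brk lt1 u v) = brk lt2 (f u) (f v)"
proof
  fix q
  show "chain_map lt2 f (brk lt1 u v) q = brk lt2 (f u) (f v) q"
  proof (cases "u = v")
    case False
    have "chain_map lt2 f (brk lt1 u v) q
        = brk lt1 u v (u, v) * brk lt2 (f u) (f v) q + brk lt1 u v (v, u) * brk lt2 (f v) (f u) q"
      using False by (subst chain_map_as_sum[of "{(u, v), (v, u)}"]) (auto dest: brk_nonzero)
    also have "\<dots> = brk lt2 (f u) (f v) q"
    proof (cases "lt1 u v")
      case True
      then show ?thesis using False by (simp add: brk_def)
    next
      case not_uv: False
      then have "lt1 v u"
        using assms(1,3,4) False unfolding strict_linear_on_def by blast
      then show ?thesis
        using False not_uv brk_swap[OF assms(2,5,6)] by (simp add: brk_def)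
    qed
    finally show ?thesis .
  qed (simp add: chain_map_def brk_def)
qed

lemma chain_map_path_chain:
  assumes "strict_linear_on V1 lt1" "strict_linear_on V2 lt2" "f ` V1 \<subseteq> V2"
  shows "set P \<subseteq> V1 \<Longrightarrow> chain_map lt2 f (path_chain lt1 P) = path_chain lt2 (map f P)"
proof (induction P rule: induct_list012)
  case (3 a b P)
  have "finite {p. brk lt1 a b p \<noteq> 0}"
    by (rule finite_subset[of _ "{(a, b), (b, a)}"]) (auto dest: brk_nonzero)
  then show ?case
    using 3 assms chain_map_brk[OF assms(1,2), of a b f]
    by (simp add: chain_map_add finite_path_chain_support image_subset_iff)
qed auto

lemma not_is_path_Nil [simp]: "\<not> is_path V E []"
  by (simp add: is_path_def)

lemma is_path_set: "is_path V E P \<Longrightarrow> set P \<subseteq> V"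
  by (simp add: is_path_def)

lemma is_path_singleton [simp]: "is_path V E [a] \<longleftrightarrow> a \<in> V"
  by (simp add: is_path_def)

lemma is_path_Cons2 [simp]:
  "is_path V E (a # b # P) \<longleftrightarrow> a \<in> V \<and> E a b \<and> is_path V E (b # P)"
  unfolding is_path_def by (auto simp: less_Suc_eq_0_disj)

lemma last_append_tl: "P \<noteq> [] \<Longrightarrow> last P = hd Q \<Longrightarrow> Q \<noteq> [] \<Longrightarrow> last (P @ tl Q) = last Q"
  by (cases Q) auto

lemma is_path_append:
  "is_path V E P \<Longrightarrow> is_path V E Q \<Longrightarrow> last P = hd Q \<Longrightarrow> is_path V E (P @ tl Q)"
proof (induction P rule: induct_list012)
  case (2 x)
  then show ?case by (cases Q) auto
qed auto

lemma is_path_rev: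
  assumes "\<And>u v. E u v \<Longrightarrow> E v u"
  shows "is_path V E P \<Longrightarrow> is_path V E (rev P)"
proof (induction P rule: induct_list012)
  case (3 x y zs)
  then have "is_path V E (rev (y # zs) @ tl [y, x])"
    by (intro is_path_append) (auto simp: assms dest: is_path_set)
  then show ?case by simp
qed auto

lemma is_path_map:
  assumes "f ` V1 \<subseteq> V2" "\<And>u v. u \<in> V1 \<Longrightarrow> v \<in> V1 \<Longrightarrow> E1 u v \<Longrightarrow> E2 (f u) (f v)"
  shows "is_path V1 E1 P \<Longrightarrow> is_path V2 E2 (map f P)"
  by (induction P rule: induct_list012) (use assms in \<open>auto dest: is_path_set\<close>)

lemma is_cycle_map:
  assumes "f ` V1 \<subseteq> V2" "\<And>u v. u \<in> V1 \<Longrightarrow> v \<in> V1 \<Longrightarrow> E1 u v \<Longrightarrow> E2 (f u) (f v)"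
    and "is_cycle V1 E1 C"
  shows "is_cycle V2 E2 (map f C)"
proof -
  have "is_path V1 E1 C" "hd C = last C" "C \<noteq> []"
    using assms(3) by (auto simp: is_cycle_def)
  then show ?thesis
    using is_path_map[of f V1 V2 E1 E2 C] assms(1,2) by (simp add: is_cycle_def hd_map last_map)
qed

lemma is_path_lift:
  assumes lift_edge: "\<And>x N. x \<in> V1 \<Longrightarrow> E2 (f x) N \<Longrightarrow> \<exists>y\<in>V1. E1 x y \<and> f y = N"
  shows "is_path V2 E2 D \<Longrightarrow> x \<in> V1 \<Longrightarrow> f x = hd D \<Longrightarrow>
    \<exists>P. is_path V1 E1 P \<and> hd P = x \<and> map f P = D"
proof (induction D arbitrary: x rule: induct_list012)
  case (2 M)
  then show ?case by (intro exI[of _ "[x]"]) simp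
next
  case (3 M N D)
  then have "E2 (f x) N"
    by simp
  then obtain y where y: "y \<in> V1" "E1 x y" "f y = N"
    using lift_edge[OF \<open>x \<in> V1\<close>] by blast
  have "is_path V2 E2 (N # D)"
    using "3.prems"(1) by simp
  then have "\<exists>P. is_path V1 E1 P \<and> hd P = y \<and> map f P = N # D"
    using "3.IH"(2) y by simp
  then obtain P where "is_path V1 E1 P" "hd P = y" "map f P = N # D"
    by (elim exE conjE)
  with 3 y show ?case
    by (intro exI[of _ "x # P"]) (cases P, auto)
qed (simp add: is_path_def)

lemma connected_graph_path:
  assumes "simple_graph V E" "E\<^sup>*\<^sup>* a b" "b \<in> V"
  shows "\<exists>P. is_path V E P \<and> hd P = a \<and> last P = b"
  using assms(2,3)
proof (induction rule: converse_rtranclp_induct)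
  case base
  then show ?case by (intro exI[of _ "[b]"]) simp
next
  case (step y z)
  then obtain P where P: "is_path V E P" "hd P = z" "last P = b"
    by auto
  moreover have "y \<in> V"
    using step(1) assms(1) unfolding simple_graph_def by blast
  ultimately show ?case
    using step(1) by (intro exI[of _ "y # P"]) (cases P, auto)
qed

lemma chain_map_H1_subset:
  assumes "strict_linear_on V1 lt1" "strict_linear_on V2 lt2"
    and "f ` V1 \<subseteq> V2" "\<And>u v. u \<in> V1 \<Longrightarrow> v \<in> V1 \<Longrightarrow> E1 u v \<Longrightarrow> E2 (f u) (f v)"
  shows "chain_map lt2 f ` H1 lt1 V1 E1 \<subseteq> H1 lt2 V2 E2"
proof -
  have image_cycle: "is_cycle V2 E2 (map f C) \<and>
      chain_map lt2 f (path_chain lt1 C) = path_chain lt2 (map f C)" if "is_cycle V1 E1 C" for C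
    using that is_cycle_map[of f V1 V2 E1 E2, OF assms(3,4)] chain_map_path_chain[OF assms(1-3)]
    by (auto simp: is_cycle_def is_path_def)
  have "chain_map lt2 f c \<in> H1 lt2 V2 E2" if "c \<in> H1 lt1 V1 E1" for c
    using that
  proof (induction rule: H1.induct)
    case (add c C)
    then show ?case
      using H1.add[OF add.IH, of "map f C"] image_cycle[OF add.hyps(2)]
      by (simp add: chain_map_add H1_finite_support finite_path_chain_support)
  next
    case (diff c C)
    then show ?case
      using H1.diff[OF diff.IH, of "map f C"] image_cycle[OF diff.hyps(2)]
      by (simp add: chain_map_diff H1_finite_support finite_path_chain_support)
  qed (simp add: H1.zero)
  then show ?thesis by blast
qed

lemma H1_subset_chain_map_image:
  assumes lift_cycle: "\<And>D. is_cycle V2 E2 D \<Longrightarrow>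
      \<exists>C. is_cycle V1 E1 C \<and> chain_map lt2 f (path_chain lt1 C) = path_chain lt2 D"
  shows "H1 lt2 V2 E2 \<subseteq> chain_map lt2 f ` H1 lt1 V1 E1"
proof
  fix d
  assume "d \<in> H1 lt2 V2 E2"
  then show "d \<in> chain_map lt2 f ` H1 lt1 V1 E1"
  proof (induction rule: H1.induct)
    case zero
    have "(\<lambda>q. 0) = chain_map lt2 f (\<lambda>q. 0)"
      by simp
    then show ?case using H1.zero by (rule image_eqI)
  next
    case (add c D)
    then obtain c' C where c': "c' \<in> H1 lt1 V1 E1" "c = chain_map lt2 f c'"
      and C: "is_cycle V1 E1 C" "chain_map lt2 f (path_chain lt1 C) = path_chain lt2 D"
      using lift_cycle by blast
    then have "(\<lambda>q. c q + path_chain lt2 D q) = chain_map lt2 f (\<lambda>q. c' q + path_chain lt1 C q)"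
      by (simp add: chain_map_add H1_finite_support finite_path_chain_support)
    then show ?case using H1.add[OF c'(1) C(1)] by blast
  next
    case (diff c D)
    then obtain c' C where c': "c' \<in> H1 lt1 V1 E1" "c = chain_map lt2 f c'"
      and C: "is_cycle V1 E1 C" "chain_map lt2 f (path_chain lt1 C) = path_chain lt2 D"
      using lift_cycle by blast
    then have "(\<lambda>q. c q - path_chain lt2 D q) = chain_map lt2 f (\<lambda>q. c' q - path_chain lt1 C q)"
      by (simp add: chain_map_diff H1_finite_support finite_path_chain_support)
    then show ?case using H1.diff[OF c'(1) C(1)] by blast
  qed
qed

lemma box_pow_V_update: "x \<in> box_pow_V V n \<Longrightarrow> t \<in> V \<Longrightarrow> x[k := t] \<in> box_pow_V V n"
  unfolding box_pow_V_def using set_update_subset_insert[of x k t] by auto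

lemma box_pow_E_update:
  "x \<in> box_pow_V V n \<Longrightarrow> k < n \<Longrightarrow> E s t \<Longrightarrow> box_pow_E E n (x[k := s]) (x[k := t])"
  unfolding box_pow_V_def box_pow_E_def by (intro conjI exI[of _ k]) auto

lemma is_path_box_pow_coordinate:
  assumes "x \<in> box_pow_V V n" "k < n" "is_path V E P"
  shows "is_path (box_pow_V V n) (box_pow_E E n) (map (\<lambda>t. x[k := t]) P)"
  by (rule is_path_map[OF _ _ assms(3)]) (auto intro: box_pow_V_update box_pow_E_update assms)

lemma eta_box_pow_V: "eta ` box_pow_V V n \<subseteq> red_pow_V V n"
  unfolding box_pow_V_def red_pow_V_def eta_def by auto

lemma eta_update: "k < length x \<Longrightarrow> eta (x[k := t]) = add_mset t (eta x - {#x ! k#})"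
  unfolding eta_def by (rule mset_update)

lemma red_pow_E_eta: "box_pow_E E n x y \<Longrightarrow> red_pow_E E n (eta x) (eta y)"
proof -
  assume "box_pow_E E n x y"
  then obtain i where i: "i < n" "E (x ! i) (y ! i)" "\<forall>j<n. j \<noteq> i \<longrightarrow> x ! j = y ! j"
    and len: "length x = n" "length y = n"
    unfolding box_pow_E_def by blast
  then have "y = x[i := y ! i]"
    by (intro nth_equalityI) (auto simp: nth_list_update)
  then have "eta y = add_mset (y ! i) (eta x - {#x ! i#})"
    using eta_update[of i x "y ! i"] i len by simp
  then show ?thesis
    using i len unfolding red_pow_E_def
    by (intro conjI exI[of _ "x ! i"] exI[of _ "y ! i"]) (auto simp: eta_def)
qed

lemma red_pow_E_lift:
  assumes "simple_graph V E" "x \<in> box_pow_V V n" "red_pow_E E n (eta x) N"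
  shows "\<exists>y\<in>box_pow_V V n. box_pow_E E n x y \<and> eta y = N"
proof -
  obtain u v where uv: "E u v" "u \<in># eta x" "N = eta x - {#u#} + {#v#}"
    using assms(3) unfolding red_pow_E_def by blast
  then obtain i where i: "i < length x" "x ! i = u"
    by (auto simp: eta_def in_set_conv_nth)
  have "v \<in> V"
    using assms(1) uv(1) unfolding simple_graph_def by blast
  moreover have "length x = n"
    using assms(2) by (simp add: box_pow_V_def)
  ultimately show ?thesis
    using box_pow_V_update[OF assms(2)] box_pow_E_update[OF assms(2), of i E u v] i uv
    by (intro bexI[of _ "x[i := v]"]) (auto simp: eta_update)
qed

definition null_joined ::
    "'v set \<Rightarrow> ('v \<Rightarrow> 'v \<Rightarrow> bool) \<Rightarrow> ('w \<Rightarrow> 'w \<Rightarrow> bool) \<Rightarrow> ('v \<Rightarrow> 'w) \<Rightarrow> 'v \<Rightarrow> 'v \<Rightarrow> bool" where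
  "null_joined V E lt f x y \<longleftrightarrow>
     (\<exists>Q. is_path V E Q \<and> hd Q = x \<and> last Q = y \<and> path_chain lt (map f Q) = (\<lambda>q. 0))"

lemma null_joined_refl: "x \<in> V \<Longrightarrow> null_joined V E lt f x x"
  unfolding null_joined_def by (intro exI[of _ "[x]"]) simp

lemma null_joined_trans:
  assumes "null_joined V E lt f x y" "null_joined V E lt f y z"
  shows "null_joined V E lt f x z"
proof -
  obtain Q1 Q2 where Q1: "is_path V E Q1" "hd Q1 = x" "last Q1 = y" "path_chain lt (map f Q1) = (\<lambda>q. 0)"
    and Q2: "is_path V E Q2" "hd Q2 = y" "last Q2 = z" "path_chain lt (map f Q2) = (\<lambda>q. 0)"
    using assms unfolding null_joined_def by blast
  have ne: "Q1 \<noteq> []" "Q2 \<noteq> []"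
    using Q1 Q2 by auto
  have "path_chain lt (map f (Q1 @ tl Q2)) = path_chain lt (map f Q1 @ tl (map f Q2))"
    by (simp add: map_tl)
  also have "\<dots> = (\<lambda>q. 0)"
    using ne Q1 Q2 by (simp add: path_chain_append last_map hd_map)
  finally show ?thesis
    unfolding null_joined_def using ne Q1 Q2 is_path_append[OF Q1(1) Q2(1)]
    by (intro exI[of _ "Q1 @ tl Q2"]) (simp add: last_append_tl)
qed

lemma box_pow_swap_null_joined:
  assumes "graph V E" "strict_linear_on (red_pow_V V n) lt"
    and x: "x \<in> box_pow_V V n" and ij: "i < n" "j < n"
  shows "null_joined (box_pow_V V n) (box_pow_E E n) lt eta x (x[i := x ! j, j := x ! i])"
proof -
  define a b where "a = x ! i" and "b = x ! j"
  have len: "length x = n"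
    using x by (simp add: box_pow_V_def)
  have sg: "simple_graph V E" and "a \<in> V" "b \<in> V"
    using assms len unfolding graph_def a_def b_def box_pow_V_def by auto
  with assms(1) obtain p where p: "is_path V E p" "hd p = a" "last p = b"
    using connected_graph_path unfolding graph_def connected_graph_def by metis
  have "p \<noteq> []"
    using p by auto
  define x' where "x' = x[i := b]"
  have x': "x' \<in> box_pow_V V n" "x' ! j = b"
    using box_pow_V_update[OF x \<open>b \<in> V\<close>] ij len by (auto simp: x'_def b_def nth_list_update)
  define Q1 Q2 where "Q1 = map (\<lambda>t. x[i := t]) p" and "Q2 = map (\<lambda>t. x'[j := t]) (rev p)"
  have paths: "is_path (box_pow_V V n) (box_pow_E E n) Q1" "is_path (box_pow_V V n) (box_pow_E E n) Q2"
    unfolding Q1_def Q2_def using is_path_rev[of E V p] sg p x' x ij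
    by (auto intro!: is_path_box_pow_coordinate simp: simple_graph_def)
  have "hd Q2 = x'"
    using \<open>p \<noteq> []\<close> p list_update_id[of x' j] x'(2) by (simp add: Q2_def hd_map hd_rev)
  moreover have "hd Q1 = x" "last Q1 = x'" "last Q2 = x[i := x ! j, j := x ! i]"
    using \<open>p \<noteq> []\<close> p by (auto simp: Q1_def Q2_def x'_def a_def b_def hd_map last_map last_rev)
  ultimately have ends: "hd Q1 = x" "last Q1 = x'" "hd Q2 = x'" "last Q2 = x[i := x ! j, j := x ! i]"
    by simp_all
  \<comment> \<open>Under eta, the second leg retraces the first one backwards.\<close>
  define L where "L = map (\<lambda>t. add_mset t (eta x - {#a#})) p"
  have "map eta Q1 = L" "map eta Q2 = rev L"
    using ij len x' eta_update[of i x b]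
    by (auto simp: Q1_def Q2_def L_def rev_map eta_update a_def x'_def)
  then have "path_chain lt (map eta (Q1 @ tl Q2)) = path_chain lt (L @ tl (rev L))"
    by (simp add: map_tl)
  also have "\<dots> = (\<lambda>q. 0)"
  proof (rule path_chain_there_and_back[OF assms(2)])
    show "set L \<subseteq> red_pow_V V n"
      using eta_box_pow_V is_path_set[OF paths(1)] \<open>map eta Q1 = L\<close> by (metis image_mono order_trans set_map)
  qed (use \<open>p \<noteq> []\<close> L_def in simp)
  finally show ?thesis
    unfolding null_joined_def using paths ends \<open>p \<noteq> []\<close>
    by (intro exI[of _ "Q1 @ tl Q2"]) (auto simp: is_path_append last_append_tl Q1_def Q2_def)
qed

lemma permute_list_transpose:
  "a < length xs \<Longrightarrow> b < length xs \<Longrightarrow>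
    permute_list (Transposition.transpose a b) xs = xs[a := xs ! b, b := xs ! a]"
  by (rule nth_equalityI)
    (auto simp: permute_list_nth permutes_swap_id nth_list_update transpose_def)

lemma box_pow_permute_null_joined:
  assumes "graph V E" "strict_linear_on (red_pow_V V n) lt"
    and x: "x \<in> box_pow_V V n" and "\<sigma> permutes {..<n}"
  shows "null_joined (box_pow_V V n) (box_pow_E E n) lt eta x (permute_list \<sigma> x)"
  using finite_lessThan assms(4)
proof (induction rule: permutes_rev_induct)
  case id
  then show ?case using null_joined_refl[OF x] by simp
next
  case (swap a b \<sigma>)
  define y where "y = permute_list \<sigma> x"
  have len: "length x = n"
    using x by (simp add: box_pow_V_def)
  have "y \<in> box_pow_V V n"
    using x swap.hyps(4) len by (auto simp: y_def box_pow_V_def dest: mset_eq_setD[OF mset_permute_list])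
  then have "null_joined (box_pow_V V n) (box_pow_E E n) lt eta y (y[a := y ! b, b := y ! a])"
    using box_pow_swap_null_joined[OF assms(1,2)] swap.hyps(1,2) by blast
  moreover have "permute_list (\<sigma> \<circ> Transposition.transpose a b) x = y[a := y ! b, b := y ! a]"
    using swap.hyps(1,2) len
    by (simp add: y_def permute_list_compose permutes_swap_id permute_list_transpose)
  ultimately show ?case
    using null_joined_trans[OF swap.IH] unfolding y_def by metis
qed

lemma red_pow_cycle_lift:
  assumes g: "graph V E" and lt1: "strict_linear_on (box_pow_V V n) lt1"
    and lt2: "strict_linear_on (red_pow_V V n) lt2"
    and D: "is_cycle (red_pow_V V n) (red_pow_E E n) D"
  shows "\<exists>C. is_cycle (box_pow_V V n) (box_pow_E E n) C \<and>
    chain_map lt2 eta (path_chain lt1 C) = path_chain lt2 D"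
proof -
  have sg: "simple_graph V E"
    using g by (simp add: graph_def)
  have pD: "is_path (red_pow_V V n) (red_pow_E E n) D" and closed: "hd D = last D"
    using D by (auto simp: is_cycle_def)
  have "D \<noteq> []"
    using pD by auto
  then have "hd D \<in> red_pow_V V n"
    using is_path_set[OF pD] hd_in_set by blast
  then obtain x where x: "x \<in> box_pow_V V n" "eta x = hd D"
    unfolding red_pow_V_def box_pow_V_def eta_def by (metis ex_mset mem_Collect_eq set_mset_mset size_mset)
  have "\<exists>P. is_path (box_pow_V V n) (box_pow_E E n) P \<and> hd P = x \<and> map eta P = D"
    by (rule is_path_lift) (use red_pow_E_lift[OF sg] pD x in auto)
  then obtain P where P: "is_path (box_pow_V V n) (box_pow_E E n) P" "hd P = x" "map eta P = D"
    by blast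
  have "P \<noteq> []"
    using P by auto
  then have "last P \<in> box_pow_V V n" "eta (last P) = last D"
    using is_path_set[OF P(1)] P(3) by (auto simp: last_map)
  obtain \<sigma> where "\<sigma> permutes {..<n}" "permute_list \<sigma> (last P) = x"
    using mset_eq_permutation[of x "last P"] x closed \<open>eta (last P) = last D\<close>
      \<open>last P \<in> box_pow_V V n\<close> by (auto simp: eta_def box_pow_V_def)
  then obtain Q where Q: "is_path (box_pow_V V n) (box_pow_E E n) Q" "hd Q = last P" "last Q = x"
    and null: "path_chain lt2 (map eta Q) = (\<lambda>q. 0)"
    using box_pow_permute_null_joined[OF g lt2 \<open>last P \<in> box_pow_V V n\<close>]
    unfolding null_joined_def by metis
  have "Q \<noteq> []"
    using Q by auto
  define C where "C = P @ tl Q"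
  have pC: "is_path (box_pow_V V n) (box_pow_E E n) C"
    using is_path_append[OF P(1) Q(1) Q(2)[symmetric]] by (simp add: C_def)
  then have "is_cycle (box_pow_V V n) (box_pow_E E n) C"
    using \<open>P \<noteq> []\<close> \<open>Q \<noteq> []\<close> P(2) Q by (simp add: is_cycle_def C_def last_append_tl)
  moreover have "chain_map lt2 eta (path_chain lt1 C) = path_chain lt2 (D @ tl (map eta Q))"
    using chain_map_path_chain[OF lt1 lt2 eta_box_pow_V is_path_set[OF pC]]
    by (simp add: C_def P(3) map_tl)
  moreover have "\<dots> = path_chain lt2 D"
    using \<open>D \<noteq> []\<close> \<open>Q \<noteq> []\<close> \<open>eta (last P) = last D\<close> Q(2) null
    by (simp add: path_chain_append hd_map)
  ultimately show ?thesis by auto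
qed

theorem lemma4p3:
  fixes V :: "'a set" and E :: "'a \<Rightarrow> 'a \<Rightarrow> bool" and n :: nat
    and lt1 :: "'a list \<Rightarrow> 'a list \<Rightarrow> bool"
    and lt2 :: "'a multiset \<Rightarrow> 'a multiset \<Rightarrow> bool"
  assumes "graph V E" and "n \<ge> 1"
    and "strict_linear_on (box_pow_V V n) lt1"
    and "strict_linear_on (red_pow_V V n) lt2"
  shows "chain_map lt2 eta ` H1 lt1 (box_pow_V V n) (box_pow_E E n)
           = H1 lt2 (red_pow_V V n) (red_pow_E E n)"
proof
  show "chain_map lt2 eta ` H1 lt1 (box_pow_V V n) (box_pow_E E n)
      \<subseteq> H1 lt2 (red_pow_V V n) (red_pow_E E n)"
    by (rule chain_map_H1_subset[OF assms(3,4) eta_box_pow_V]) (rule red_pow_E_eta)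
  show "H1 lt2 (red_pow_V V n) (red_pow_E E n)
      \<subseteq> chain_map lt2 eta ` H1 lt1 (box_pow_V V n) (box_pow_E E n)"
    by (rule H1_subset_chain_map_image) (rule red_pow_cycle_lift[OF assms(1,3,4)])
qed

end
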